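(* Let $\mathcal{V}$ be a finite vocabulary, $N\ge1$, $\mathcal{S}$ a finite corpus of sequences in $\mathcal{V}^N$, and $q$ a language model on $\mathcal{V}^N$. Let $b\ge0$ and suppose $g:\bigcup_{j=1}^N\mathcal{V}^j\to[0,1]$ has generalized training advantage $\hat\beta(g)\ge b$. Define a distribution $q'$ through its conditional probabilities $$q'(x_j\mid x_1,\dots,x_{j-1})=q(x_j\mid x_1,\dots,x_{j-1})\,e^{-bg(x_1,\dots,x_j)}/Z_{q'}(x_1,\dots,x_{j-1}),$$ where $Z_{q'}(x_1,\dots,x_{j-1})=\sum_{\tilde{x}_j\in\mathcal{V}}q(\tilde{x}_j\mid x_1,\dots,x_{j-1})e^{-bg(x_1,\dots,x_{j-1},\tilde{x}_j)}$. Then $$\hat{L}(q';\mathcal{S})\le\hat{L}(q;\mathcal{S})-Nb^2/2.$$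
   Context: A language model $q$ on $\mathcal{V}^N$ is given by conditionals $q(x_j\mid x_1,\dots,x_{j-1})$, $j=1,\dots,N$ (for $j=1$ this is $q(x_1)$), with $q(x_1,\dots,x_N)=\prod_{j=1}^Nq(x_j\mid x_1,\dots,x_{j-1})$. The log-loss is $\hat{L}(q;\mathcal{S})=-\hat{\mathrm{E}}_{x\sim\mathcal{S}}[\log q(x)]$, where $\hat{\mathrm{E}}_{x\sim\mathcal{S}}$ is the empirical average over sequences in $\mathcal{S}$. The generalized training advantage of $g$ (with respect to $\mathcal{S}$ and $q$) is $$\hat{\beta}(g)=\frac{1}{N}\sum_{j=1}^{N}\hat{\mathrm{E}}_{x\sim\mathcal{S}}\Bigl[\mathrm{E}_{w\sim q(\cdot\mid x_1,\dots,x_{j-1})}g(x_1,\dots,x_{j-1},w)-g(x_1,\dots,x_j)\Bigr].$$ *)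

theory Defs
  imports Complex_Main "HOL-Library.Extended_Real"
begin

(* A language model on V^N (V = the finite type 'v) is given by its conditionals:
   q pfx w = q(w | pfx), for prefixes pfx of length < N. *)
definition lang_model :: "nat \<Rightarrow> ('v::finite list \<Rightarrow> 'v \<Rightarrow> real) \<Rightarrow> bool" where
  "lang_model N q \<longleftrightarrow>
     (\<forall>pfx. length pfx < N \<longrightarrow> (\<forall>w. 0 \<le> q pfx w) \<and> (\<Sum>w\<in>UNIV. q pfx w) = 1)"

definition seq_prob :: "nat \<Rightarrow> ('v list \<Rightarrow> 'v \<Rightarrow> real) \<Rightarrow> 'v list \<Rightarrow> real" where
  "seq_prob N q x = (\<Prod>j<N. q (take j x) (x ! j))"

(* empirical average over the corpus S (a list, duplicates allowed) *)
definition emp_avg :: "'a list \<Rightarrow> ('a \<Rightarrow> real) \<Rightarrow> real" where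
  "emp_avg S f = (\<Sum>x\<leftarrow>S. f x) / real (length S)"

definition log_loss :: "nat \<Rightarrow> ('v list \<Rightarrow> 'v \<Rightarrow> real) \<Rightarrow> 'v list list \<Rightarrow> ereal" where
  "log_loss N q S =
     (if (\<forall>x\<in>set S. 0 < seq_prob N q x)
      then ereal (- emp_avg S (\<lambda>x. ln (seq_prob N q x)))
      else \<infinity>)"

(* generalized training advantage, 0-indexed: position j has prefix take j x, token x!j *)
definition gen_train_adv ::
  "nat \<Rightarrow> ('v::finite list \<Rightarrow> 'v \<Rightarrow> real) \<Rightarrow> 'v list list \<Rightarrow> ('v list \<Rightarrow> real) \<Rightarrow> real" where
  "gen_train_adv N q S g =
     (1 / real N) * (\<Sum>j<N. emp_avg S (\<lambda>x.
        (\<Sum>w\<in>UNIV. q (take j x) w * g (take j x @ [w])) - g (take (Suc j) x)))"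

definition tilt_Z :: "('v::finite list \<Rightarrow> 'v \<Rightarrow> real) \<Rightarrow> ('v list \<Rightarrow> real) \<Rightarrow> real \<Rightarrow> 'v list \<Rightarrow> real" where
  "tilt_Z q g b pfx = (\<Sum>w\<in>UNIV. q pfx w * exp (- b * g (pfx @ [w])))"

definition tilt :: "('v::finite list \<Rightarrow> 'v \<Rightarrow> real) \<Rightarrow> ('v list \<Rightarrow> real) \<Rightarrow> real \<Rightarrow> 'v list \<Rightarrow> 'v \<Rightarrow> real" where
  "tilt q g b pfx w = q pfx w * exp (- b * g (pfx @ [w])) / tilt_Z q g b pfx"

end

theory Submission
  imports Defs
begin

(* At every position j the tilt changes the log-probability of the observed token by
   -b g(x_1..x_j) - ln Z. Since g takes values in [0,1], exp(-t) <= 1 - t + t^2/2 and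
   ln y <= y - 1 give ln Z <= -b E_q[g] + b^2/2. Summing over the N positions, the
   log-likelihood of a sequence grows by at least b times its training advantage minus
   N b^2/2; averaged over the corpus the advantage is N beta >= N b, so the log-loss drops
   by at least N b^2 - N b^2/2. *)

lemma exp_minus_le_quadratic:
  fixes t :: real
  assumes "0 \<le> t"
  shows "exp (- t) \<le> 1 - t + t\<^sup>2 / 2"
proof -
  let ?f = "\<lambda>x::real. 1 - x + x\<^sup>2 / 2 - exp (- x)"
  have "?f 0 \<le> ?f t"
  proof (rule DERIV_nonneg_imp_increasing_open[OF assms])
    fix x :: real
    have "DERIV ?f x :> (- 1 + x + exp (- x))"
      by (auto intro!: derivative_eq_intros simp: power2_eq_square)
    moreover have "0 \<le> - 1 + x + exp (- x)"
      using exp_ge_add_one_self[of "- x"] by simp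
    ultimately show "\<exists>y. DERIV ?f x :> y \<and> 0 \<le> y" by blast
  next
    show "continuous_on {0..t} ?f" by (intro continuous_intros) auto
  qed
  then show ?thesis by simp
qed

lemma sum_weighted_exp_pos:
  fixes p :: "'a::finite \<Rightarrow> real"
  assumes "\<And>w. 0 \<le> p w" and "(\<Sum>w\<in>UNIV. p w) = 1"
  shows "0 < (\<Sum>w\<in>UNIV. p w * exp (f w))"
proof -
  obtain w where "p w \<noteq> 0"
    using assms(2) by (metis sum.neutral zero_neq_one)
  then have "0 < p w"
    using assms(1)[of w] by simp
  then show ?thesis
    using assms(1) by (intro sum_pos2[of UNIV w]) auto
qed

lemma ln_sum_weighted_exp_le:
  fixes p G :: "'a::finite \<Rightarrow> real" and b :: real
  assumes p_nonneg: "\<And>w. 0 \<le> p w" and p_sum: "(\<Sum>w\<in>UNIV. p w) = 1"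
    and G_range: "\<And>w. 0 \<le> G w \<and> G w \<le> 1" and "0 \<le> b"
  shows "ln (\<Sum>w\<in>UNIV. p w * exp (- b * G w)) \<le> - b * (\<Sum>w\<in>UNIV. p w * G w) + b\<^sup>2 / 2"
proof -
  have "(\<Sum>w\<in>UNIV. p w * exp (- b * G w)) \<le> (\<Sum>w\<in>UNIV. p w * (1 - b * G w + b\<^sup>2 / 2))"
  proof (intro sum_mono mult_left_mono)
    fix w
    have "exp (- (b * G w)) \<le> 1 - b * G w + (b * G w)\<^sup>2 / 2"
      using G_range \<open>0 \<le> b\<close> by (intro exp_minus_le_quadratic) auto
    also have "(b * G w)\<^sup>2 \<le> b\<^sup>2"
      using G_range[of w] by (simp add: power_mult_distrib mult_left_le power_le_one)
    finally show "exp (- b * G w) \<le> 1 - b * G w + b\<^sup>2 / 2" by simp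
  qed (use p_nonneg in auto)
  also have "\<dots> = 1 - b * (\<Sum>w\<in>UNIV. p w * G w) + b\<^sup>2 / 2"
    using p_sum by (simp add: algebra_simps sum.distrib sum_subtractf sum_distrib_left
        sum_distrib_right[symmetric])
  finally show ?thesis
    using ln_le_minus_one[OF sum_weighted_exp_pos[OF p_nonneg p_sum, of "\<lambda>w. - b * G w"]] by linarith
qed

lemma emp_avg_mono:
  "(\<And>x. x \<in> set S \<Longrightarrow> f x \<le> h x) \<Longrightarrow> emp_avg S f \<le> emp_avg S h"
  unfolding emp_avg_def by (intro divide_right_mono sum_list_mono) auto

lemma emp_avg_add: "emp_avg S (\<lambda>x. f x + h x) = emp_avg S f + emp_avg S h"
  by (simp add: emp_avg_def sum_list_addf add_divide_distrib)

lemma emp_avg_diff: "emp_avg S (\<lambda>x. f x - h x) = emp_avg S f - emp_avg S h"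
  by (simp add: emp_avg_def sum_list_subtractf diff_divide_distrib)

lemma emp_avg_cmult: "emp_avg S (\<lambda>x. c * f x) = c * emp_avg S f"
  by (simp add: emp_avg_def sum_list_const_mult)

lemma emp_avg_const: "S \<noteq> [] \<Longrightarrow> emp_avg S (\<lambda>x. c) = c"
  by (simp add: emp_avg_def sum_list_triv)

lemma emp_avg_sum:
  "emp_avg S (\<lambda>x. \<Sum>j\<in>A. f j x) = (\<Sum>j\<in>A. emp_avg S (f j))"
proof -
  have "(\<Sum>x\<leftarrow>S. \<Sum>j\<in>A. f j x) = (\<Sum>j\<in>A. \<Sum>x\<leftarrow>S. f j x)"
    by (induction S) (auto simp: sum.distrib)
  then show ?thesis by (simp add: emp_avg_def sum_divide_distrib)
qed

definition seq_advantage :: "nat \<Rightarrow> ('v::finite list \<Rightarrow> 'v \<Rightarrow> real) \<Rightarrow> ('v list \<Rightarrow> real) \<Rightarrow> 'v list \<Rightarrow> real" where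
  "seq_advantage N q g x =
     (\<Sum>j<N. (\<Sum>w\<in>UNIV. q (take j x) w * g (take j x @ [w])) - g (take (Suc j) x))"

lemma gen_train_adv_eq: "gen_train_adv N q S g = emp_avg S (seq_advantage N q g) / real N"
  by (simp add: gen_train_adv_def seq_advantage_def[abs_def] emp_avg_sum)

lemma tilt_Z_pos:
  assumes "\<And>v. 0 \<le> q pfx v" and "(\<Sum>v\<in>UNIV. q pfx v) = 1"
  shows "0 < tilt_Z q g b pfx"
  unfolding tilt_Z_def using assms by (rule sum_weighted_exp_pos)

lemma tilt_pos:
  assumes "\<And>v. 0 \<le> q pfx v" and "(\<Sum>v\<in>UNIV. q pfx v) = 1" and "0 < q pfx w"
  shows "0 < tilt q g b pfx w"
  using tilt_Z_pos[of q pfx, OF assms(1,2)] assms(3) by (simp add: tilt_def)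

lemma ln_tilt_ge:
  assumes q_nonneg: "\<And>v. 0 \<le> q pfx v" and q_sum: "(\<Sum>v\<in>UNIV. q pfx v) = 1"
    and "0 < q pfx w" and g_range: "\<And>v. 0 \<le> g (pfx @ [v]) \<and> g (pfx @ [v]) \<le> 1"
    and "0 \<le> b"
  shows "ln (q pfx w) + b * ((\<Sum>v\<in>UNIV. q pfx v * g (pfx @ [v])) - g (pfx @ [w])) - b\<^sup>2 / 2
         \<le> ln (tilt q g b pfx w)"
proof -
  have "ln (tilt q g b pfx w) = ln (q pfx w) - b * g (pfx @ [w]) - ln (tilt_Z q g b pfx)"
    using \<open>0 < q pfx w\<close> tilt_Z_pos[of q pfx g b, OF q_nonneg q_sum] by (simp add: tilt_def ln_div ln_mult)
  moreover have "ln (tilt_Z q g b pfx) \<le> - b * (\<Sum>v\<in>UNIV. q pfx v * g (pfx @ [v])) + b\<^sup>2 / 2"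
    unfolding tilt_Z_def using q_nonneg q_sum g_range \<open>0 \<le> b\<close> by (rule ln_sum_weighted_exp_le)
  ultimately show ?thesis by (simp add: algebra_simps)
qed

lemma seq_prob_pos_imp_factor_pos:
  assumes "lang_model N q" and "0 < seq_prob N q x" and "j < N"
  shows "0 < q (take j x) (x ! j)"
proof -
  have "seq_prob N q x \<noteq> 0"
    using assms(2) by simp
  then have "q (take j x) (x ! j) \<noteq> 0"
    using assms(3) unfolding seq_prob_def by (auto simp: prod_zero_iff)
  moreover have "0 \<le> q (take j x) (x ! j)"
    using assms(1,3) by (simp add: lang_model_def)
  ultimately show ?thesis by simp
qed

lemma ln_seq_prob:
  assumes "\<And>j. j < N \<Longrightarrow> 0 < q (take j x) (x ! j)"
  shows "ln (seq_prob N q x) = (\<Sum>j<N. ln (q (take j x) (x ! j)))"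
  unfolding seq_prob_def using assms by (intro ln_prod) (simp_all add: order_less_imp_not_eq2)

lemma seq_prob_tilt_pos:
  assumes "lang_model N q" and "0 < seq_prob N q x"
  shows "0 < seq_prob N (tilt q g b) x"
  unfolding seq_prob_def using assms
  by (intro prod_pos tilt_pos seq_prob_pos_imp_factor_pos) (auto simp: lang_model_def)

lemma ln_seq_prob_tilt_ge:
  assumes lm: "lang_model N q" and "length x = N"
    and g_range: "\<forall>xs. 1 \<le> length xs \<and> length xs \<le> N \<longrightarrow> 0 \<le> g xs \<and> g xs \<le> 1"
    and "0 \<le> b" and q_pos: "0 < seq_prob N q x"
  shows "ln (seq_prob N q x) + b * seq_advantage N q g x - real N * b\<^sup>2 / 2
         \<le> ln (seq_prob N (tilt q g b) x)"
proof -
  note factor_pos = seq_prob_pos_imp_factor_pos[OF lm q_pos]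
  have step: "ln (q (take j x) (x ! j))
        + b * ((\<Sum>w\<in>UNIV. q (take j x) w * g (take j x @ [w])) - g (take (Suc j) x)) - b\<^sup>2 / 2
      \<le> ln (tilt q g b (take j x) (x ! j))" if "j < N" for j
  proof -
    have "take (Suc j) x = take j x @ [x ! j]"
      using that \<open>length x = N\<close> by (simp add: take_Suc_conv_app_nth)
    moreover have "ln (q (take j x) (x ! j))
        + b * ((\<Sum>w\<in>UNIV. q (take j x) w * g (take j x @ [w])) - g (take j x @ [x ! j])) - b\<^sup>2 / 2
      \<le> ln (tilt q g b (take j x) (x ! j))"
      using lm that \<open>length x = N\<close> g_range \<open>0 \<le> b\<close> factor_pos[OF that]
      by (intro ln_tilt_ge) (auto simp: lang_model_def)
    ultimately show ?thesis by simp
  qed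
  have "ln (seq_prob N q x) + b * seq_advantage N q g x - real N * b\<^sup>2 / 2
      = (\<Sum>j<N. ln (q (take j x) (x ! j))
           + b * ((\<Sum>w\<in>UNIV. q (take j x) w * g (take j x @ [w])) - g (take (Suc j) x)) - b\<^sup>2 / 2)"
    by (simp add: ln_seq_prob[of N q x, OF factor_pos] seq_advantage_def sum.distrib sum_subtractf
        sum_distrib_left right_diff_distrib)
  also have "\<dots> \<le> (\<Sum>j<N. ln (tilt q g b (take j x) (x ! j)))"
    by (intro sum_mono step) simp
  also have "\<dots> = ln (seq_prob N (tilt q g b) x)"
    using lm q_pos
    by (intro ln_seq_prob[symmetric] tilt_pos factor_pos) (auto simp: lang_model_def)
  finally show ?thesis .
qed

theorem lemma3:
  fixes N :: nat and q :: "'v::finite list \<Rightarrow> 'v \<Rightarrow> real"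
    and S :: "'v list list" and g :: "'v list \<Rightarrow> real" and b :: real
  assumes "N \<ge> 1"
    and "S \<noteq> []"
    and "\<forall>x\<in>set S. length x = N"
    and "lang_model N q"
    and "b \<ge> 0"
    and "\<forall>xs. 1 \<le> length xs \<and> length xs \<le> N \<longrightarrow> 0 \<le> g xs \<and> g xs \<le> 1"
    and "gen_train_adv N q S g \<ge> b"
  shows "log_loss N (tilt q g b) S \<le> log_loss N q S - ereal (real N * b\<^sup>2 / 2)"
proof (cases "\<forall>x\<in>set S. 0 < seq_prob N q x")
  case False
  then have "log_loss N q S = \<infinity>" by (simp add: log_loss_def)
  then show ?thesis by simp
next
  case True
  let ?ln_q = "\<lambda>x. ln (seq_prob N q x)" and ?ln_tilt = "\<lambda>x. ln (seq_prob N (tilt q g b) x)"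
  have "emp_avg S (\<lambda>x. ?ln_q x + b * seq_advantage N q g x - real N * b\<^sup>2 / 2) \<le> emp_avg S ?ln_tilt"
    using True assms(3-6) by (intro emp_avg_mono ln_seq_prob_tilt_ge) auto
  then have "emp_avg S ?ln_q + b * emp_avg S (seq_advantage N q g) - real N * b\<^sup>2 / 2
      \<le> emp_avg S ?ln_tilt"
    using \<open>S \<noteq> []\<close> by (simp add: emp_avg_add emp_avg_diff emp_avg_cmult emp_avg_const)
  moreover have "real N * b \<le> emp_avg S (seq_advantage N q g)"
    using assms(1,7) by (simp add: gen_train_adv_eq field_simps)
  then have "b * (real N * b) \<le> b * emp_avg S (seq_advantage N q g)"
    using \<open>b \<ge> 0\<close> by (rule mult_left_mono)
  then have "real N * b\<^sup>2 \<le> b * emp_avg S (seq_advantage N q g)"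
    by (simp add: power2_eq_square mult.left_commute)
  ultimately have "- emp_avg S ?ln_tilt \<le> - emp_avg S ?ln_q - real N * b\<^sup>2 / 2"
    by linarith
  moreover have "\<forall>x\<in>set S. 0 < seq_prob N (tilt q g b) x"
    using True assms(4) by (simp add: seq_prob_tilt_pos)
  ultimately show ?thesis
    using True by (simp add: log_loss_def)
qed

end
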